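(* Let $\phi:\mathbb{R}\to\mathbb{R}$ be differentiable and $f(z)=W_d\phi(W_{d-1}\phi(\cdots\phi(W_1z)\cdots))$ with $W_i\in\mathbb{R}^{k_i\times k_{i-1}}$, $k_d=k_0$. Let $x\in\mathbb{R}^{k_0}$ with $\|x\|_2=1$, and run gradient descent with learning rate $\gamma>0$ on $\mathcal{L}(x,f)=\frac12\|x-f(x)\|_2^2$. Suppose $W_d^{(0)}=x{a^{(0)}}^T$, $W_1^{(0)}=b^{(0)}x^T$ with $a^{(0)}\in\mathbb{R}^{k_{d-1}}$, $b^{(0)}\in\mathbb{R}^{k_1}$ such that $a_j^{(0)}=a_1^{(0)}$ for all $j$ and $b_l^{(0)}=b_1^{(0)}$ for all $l$, and $W_i^{(0)}=w_i^{(0)}\mathbf{1}_{k_i\times k_{i-1}}$ with $w_i^{(0)}\in\mathbb{R}$ for $i\in\{2,\dots,d-1\}$. Then for all time steps $t$, $W_d^{(t)}=x{a^{(t)}}^T$, $W_1^{(t)}=b^{(t)}x^T$ with $a_j^{(t)}=a_1^{(t)}$ for all $j\in[k_{d-1}]$, $b_l^{(t)}=b_1^{(t)}$ for all $l\in[k_1]$, and $W_i^{(t)}=w_i^{(t)}\mathbf{1}_{k_i\times k_{i-1}}$ for some $w_i^{(t)}\in\mathbb{R}$, $i\in\{2,\dots,d-1\}$.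
   Context: $\phi$ is applied coordinatewise; $\mathbf{1}_{m\times n}$ is the $m\times n$ all-ones matrix. Gradient descent updates each $W_i\leftarrow W_i-\gamma\nabla_{W_i}\mathcal{L}$ simultaneously. *)

theory Defs
  imports "HOL-Analysis.Analysis"
begin

text \<open>Weights: W i p q is entry (p,q) of the matrix W_i (layer i = 1..d),
  with p < k i and q < k (i-1). Vectors in R^n are functions nat => real
  with indices below n.\<close>

type_synonym weights = "nat \<Rightarrow> nat \<Rightarrow> nat \<Rightarrow> real"

fun act :: "(real \<Rightarrow> real) \<Rightarrow> weights \<Rightarrow> (nat \<Rightarrow> nat) \<Rightarrow> nat \<Rightarrow> (nat \<Rightarrow> real) \<Rightarrow> nat \<Rightarrow> real" where
  "act \<phi> W k 0 z = z"
| "act \<phi> W k (Suc i) z = (\<lambda>p. \<phi> (\<Sum>q<k i. W (Suc i) p q * act \<phi> W k i z q))"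

definition net :: "(real \<Rightarrow> real) \<Rightarrow> weights \<Rightarrow> (nat \<Rightarrow> nat) \<Rightarrow> nat \<Rightarrow> (nat \<Rightarrow> real) \<Rightarrow> nat \<Rightarrow> real" where
  "net \<phi> W k d z = (\<lambda>p. \<Sum>q<k (d - 1). W d p q * act \<phi> W k (d - 1) z q)"

definition loss :: "(real \<Rightarrow> real) \<Rightarrow> weights \<Rightarrow> (nat \<Rightarrow> nat) \<Rightarrow> nat \<Rightarrow> (nat \<Rightarrow> real) \<Rightarrow> real" where
  "loss \<phi> W k d x = 1/2 * (\<Sum>p<k d. (x p - net \<phi> W k d x p)^2)"

definition grad :: "(real \<Rightarrow> real) \<Rightarrow> (nat \<Rightarrow> nat) \<Rightarrow> nat \<Rightarrow> (nat \<Rightarrow> real) \<Rightarrow> weights \<Rightarrow> weights" where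
  "grad \<phi> k d x W = (\<lambda>i p q.
     deriv (\<lambda>s. loss \<phi> (W(i := (W i)(p := (W i p)(q := s)))) k d x) (W i p q))"

definition gd_step :: "(real \<Rightarrow> real) \<Rightarrow> (nat \<Rightarrow> nat) \<Rightarrow> nat \<Rightarrow> (nat \<Rightarrow> real) \<Rightarrow> real \<Rightarrow> weights \<Rightarrow> weights" where
  "gd_step \<phi> k d x \<gamma> W = (\<lambda>i p q. W i p q - \<gamma> * grad \<phi> k d x W i p q)"

definition gd_iter :: "(real \<Rightarrow> real) \<Rightarrow> (nat \<Rightarrow> nat) \<Rightarrow> nat \<Rightarrow> (nat \<Rightarrow> real) \<Rightarrow> real \<Rightarrow> weights \<Rightarrow> nat \<Rightarrow> weights" where
  "gd_iter \<phi> k d x \<gamma> W0 t = ((gd_step \<phi> k d x \<gamma>) ^^ t) W0"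

end

theory Submission
  imports Defs
begin

text \<open>Two neurons of a hidden
  layer with equal incoming and equal outgoing weights can be swapped without changing the
  network, so the loss gradient has the same equal rows and columns; this keeps the middle layers
  constant and the rows of \<open>W\<^sub>1\<close> and the columns of \<open>W\<^sub>d\<close> equal. Alignment with \<open>x\<close> comes from
  the two outer gradients: \<open>\<partial>L/\<partial>W\<^sub>d = -(x - f(x)) h\<^sup>T\<close>, where \<open>f(x) = x a\<^sup>T h\<close> is a multiple
  of \<open>x\<close>, and \<open>\<partial>L/\<partial>W\<^sub>1 = \<delta> x\<^sup>T\<close>, because the loss depends on \<open>W\<^sub>1\<close> only through \<open>W\<^sub>1 x\<close>.\<close>

lemma sum_fun_upd_mult:
  fixes f g :: "'a \<Rightarrow> 'b::comm_ring"
  assumes "finite A" "q \<in> A"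
  shows "(\<Sum>r\<in>A. (f(q := s)) r * g r) = (\<Sum>r\<in>A. f r * g r) + (s - f q) * g q"
  using assms by (simp add: sum.remove algebra_simps)

abbreviation weight_upd :: "weights \<Rightarrow> nat \<Rightarrow> nat \<Rightarrow> nat \<Rightarrow> real \<Rightarrow> weights" where
  "weight_upd W i p q s \<equiv> W(i := (W i)(p := (W i p)(q := s)))"

lemma act_cong_layers:
  "(\<And>l. 1 \<le> l \<Longrightarrow> l \<le> i \<Longrightarrow> W' l = W l) \<Longrightarrow> act \<phi> W' k i z = act \<phi> W k i z"
  by (induction i) auto

lemma act_cong:
  assumes "\<And>i p q. 1 \<le> i \<Longrightarrow> i \<le> d \<Longrightarrow> p < k i \<Longrightarrow> q < k (i-1) \<Longrightarrow> W' i p q = W i p q"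
  shows "i \<le> d \<Longrightarrow> p < k i \<Longrightarrow> act \<phi> W' k i z p = act \<phi> W k i z p"
proof (induction i arbitrary: p)
  case (Suc i)
  then have "(\<Sum>q<k i. W' (Suc i) p q * act \<phi> W' k i z q) = (\<Sum>q<k i. W (Suc i) p q * act \<phi> W k i z q)"
    using assms by (intro sum.cong) auto
  then show ?case by simp
qed simp

lemma loss_cong:
  assumes "\<And>i p q. 1 \<le> i \<Longrightarrow> i \<le> d \<Longrightarrow> p < k i \<Longrightarrow> q < k (i-1) \<Longrightarrow> W' i p q = W i p q"
    and "d \<ge> 1"
  shows "loss \<phi> W' k d z = loss \<phi> W k d z"
proof -
  have "net \<phi> W' k d z p = net \<phi> W k d z p" if "p < k d" for p
    unfolding net_def using assms that act_cong[OF assms(1), of "d-1"] by (intro sum.cong) auto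
  then show ?thesis unfolding loss_def by simp
qed

definition swap_neurons :: "nat \<Rightarrow> nat \<Rightarrow> nat \<Rightarrow> weights \<Rightarrow> weights" where
  "swap_neurons j u v W = W(j := (\<lambda>p q. W j (Transposition.transpose u v p) q),
     Suc j := (\<lambda>p q. W (Suc j) p (Transposition.transpose u v q)))"

lemma act_swap_neurons:
  assumes "j \<ge> 1" "u < k j" "v < k j"
  shows "act \<phi> (swap_neurons j u v W) k i z =
    (if i = j then act \<phi> W k j z \<circ> Transposition.transpose u v else act \<phi> W k i z)"
proof (induction i)
  case (Suc i)
  have "(\<Sum>q<k j. W (Suc j) p (Transposition.transpose u v q) *
        act \<phi> W k j z (Transposition.transpose u v q))
      = (\<Sum>q<k j. W (Suc j) p q * act \<phi> W k j z q)" for p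
    using sum.permute[OF permutes_swap_id[of u "{..<k j}" v], of "\<lambda>q. W (Suc j) p q * act \<phi> W k j z q"]
      assms by (simp add: comp_def)
  with Suc show ?case by (auto simp: swap_neurons_def comp_def)
qed (use assms in auto)

lemma loss_swap_neurons:
  assumes "j \<ge> 1" "Suc j \<le> d" "u < k j" "v < k j"
  shows "loss \<phi> (swap_neurons j u v W) k d z = loss \<phi> W k d z"
proof -
  have "net \<phi> (swap_neurons j u v W) k d z p = net \<phi> W k d z p" for p
  proof (cases "d = Suc j")
    case True
    then show ?thesis
      unfolding net_def act_swap_neurons[where k=k, OF assms(1,3,4)]
      using sum.permute[OF permutes_swap_id[of u "{..<k j}" v], of "\<lambda>q. W (Suc j) p q * act \<phi> W k j z q"]
        assms by (simp add: swap_neurons_def comp_def)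
  next
    case False
    then show ?thesis
      unfolding net_def act_swap_neurons[where k=k, OF assms(1,3,4)] using assms by (simp add: swap_neurons_def)
  qed
  then show ?thesis unfolding loss_def by simp
qed

lemma grad_eq_of_loss_eq:
  assumes "\<And>s. loss \<phi> (weight_upd W i p q s) k d x = loss \<phi> (weight_upd W i' p' q' s) k d x"
    and "W i p q = W i' p' q'"
  shows "grad \<phi> k d x W i p q = grad \<phi> k d x W i' p' q'"
  unfolding grad_def by (simp add: assms)

lemma grad_eq_swapped_rows:
  assumes j: "j \<ge> 1" "Suc j \<le> d" "u < k j" "v < k j" and q: "q < k (j-1)"
    and rows: "\<And>q. q < k (j-1) \<Longrightarrow> W j u q = W j v q"
    and cols: "\<And>p. p < k (Suc j) \<Longrightarrow> W (Suc j) p u = W (Suc j) p v"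
  shows "grad \<phi> k d x W j u q = grad \<phi> k d x W j v q"
proof (rule grad_eq_of_loss_eq)
  fix s
  have "loss \<phi> (weight_upd W j u q s) k d x = loss \<phi> (swap_neurons j u v (weight_upd W j u q s)) k d x"
    using loss_swap_neurons[where k=k, OF j] by simp
  also have "\<dots> = loss \<phi> (weight_upd W j v q s) k d x"
    using j rows cols by (intro loss_cong) (auto simp: swap_neurons_def Transposition.transpose_def)
  finally show "loss \<phi> (weight_upd W j u q s) k d x = loss \<phi> (weight_upd W j v q s) k d x" .
qed (use rows q in simp)

lemma grad_eq_swapped_cols:
  assumes j: "j \<ge> 1" "Suc j \<le> d" "u < k j" "v < k j" and p: "p < k (Suc j)"
    and rows: "\<And>q. q < k (j-1) \<Longrightarrow> W j u q = W j v q"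
    and cols: "\<And>p. p < k (Suc j) \<Longrightarrow> W (Suc j) p u = W (Suc j) p v"
  shows "grad \<phi> k d x W (Suc j) p u = grad \<phi> k d x W (Suc j) p v"
proof (rule grad_eq_of_loss_eq)
  fix s
  have "loss \<phi> (weight_upd W (Suc j) p u s) k d x
      = loss \<phi> (swap_neurons j u v (weight_upd W (Suc j) p u s)) k d x"
    using loss_swap_neurons[where k=k, OF j] by simp
  also have "\<dots> = loss \<phi> (weight_upd W (Suc j) p v s) k d x"
    using j rows cols by (intro loss_cong) (auto simp: swap_neurons_def Transposition.transpose_def)
  finally show "loss \<phi> (weight_upd W (Suc j) p u s) k d x = loss \<phi> (weight_upd W (Suc j) p v s) k d x" .
qed (use cols p in simp)

lemma act_differentiable:
  assumes "\<And>z. \<phi> differentiable (at z)"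
    and "\<And>i p q. (\<lambda>s. V s i p q) differentiable (at s0)"
  shows "(\<lambda>s. act \<phi> (V s) k i z p) differentiable (at s0)"
proof (induction i arbitrary: p)
  case (Suc i)
  have "(\<lambda>s. \<Sum>q<k i. V s (Suc i) p q * act \<phi> (V s) k i z q) differentiable (at s0)"
    using Suc assms(2) by (intro differentiable_sum ballI differentiable_mult) auto
  then have "(\<lambda>s. \<phi> (\<Sum>q<k i. V s (Suc i) p q * act \<phi> (V s) k i z q)) differentiable (at s0)"
    using assms(1) by (auto intro: differentiable_compose[where f = \<phi>])
  then show ?case by simp
qed simp

lemma loss_differentiable:
  assumes "\<And>z. \<phi> differentiable (at z)"
    and "\<And>i p q. (\<lambda>s. V s i p q) differentiable (at s0)"
  shows "(\<lambda>s. loss \<phi> (V s) k d z) differentiable (at s0)"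
proof -
  have "(\<lambda>s. net \<phi> (V s) k d z p) differentiable (at s0)" for p
    unfolding net_def using act_differentiable[OF assms] assms(2)
    by (intro differentiable_sum ballI differentiable_mult) auto
  then show ?thesis
    unfolding loss_def by (intro differentiable_mult differentiable_sum differentiable_power
        differentiable_diff differentiable_const ballI) auto
qed

lemma loss_cong_first_preact:
  assumes "d \<ge> 2" and "\<And>i. i \<noteq> 1 \<Longrightarrow> W' i = W i"
    and "\<And>p. (\<Sum>q<k 0. W' 1 p q * z q) = (\<Sum>q<k 0. W 1 p q * z q)"
  shows "loss \<phi> W' k d z = loss \<phi> W k d z"
proof -
  have "act \<phi> W' k i z = act \<phi> W k i z" if "i \<ge> 1" for i
    using that
  proof (induction i)
    case (Suc i)
    then show ?case using assms(2,3) by (cases "i = 0") simp_all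
  qed simp
  then have "net \<phi> W' k d z = net \<phi> W k d z"
    unfolding net_def using assms(1,2) by simp
  then show ?thesis unfolding loss_def by simp
qed

text \<open>For \<open>\<parallel>x\<parallel> = 1\<close> the row \<open>y x\<^sup>T\<close> gives neuron \<open>l\<close> of the first layer the preactivation \<open>y\<close>,
  so this is the loss as a function of that preactivation.\<close>

definition first_preact_loss :: "(real \<Rightarrow> real) \<Rightarrow> (nat \<Rightarrow> nat) \<Rightarrow> nat \<Rightarrow> (nat \<Rightarrow> real) \<Rightarrow>
    weights \<Rightarrow> nat \<Rightarrow> real \<Rightarrow> real" where
  "first_preact_loss \<phi> k d x W l y = loss \<phi> (W(1 := (W 1)(l := (\<lambda>q. y * x q)))) k d x"

lemma grad_first_layer:
  assumes "\<And>z. \<phi> differentiable (at z)" and "d \<ge> 2"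
    and xnorm: "(\<Sum>q<k 0. (x q)^2) = 1" and q: "q < k 0"
  shows "grad \<phi> k d x W 1 l q =
    x q * deriv (first_preact_loss \<phi> k d x W l) (\<Sum>r<k 0. W 1 l r * x r)"
proof -
  define P where "P = (\<Sum>r<k 0. W 1 l r * x r)"
  let ?G = "first_preact_loss \<phi> k d x W l"
  have preact: "(\<Sum>r<k 0. (c * x r) * x r) = c" for c
    using xnorm by (simp add: sum_distrib_left[symmetric] power2_eq_square mult.assoc)
  have loss_eq: "loss \<phi> (weight_upd W 1 l q s) k d x = ?G (P + (s - W 1 l q) * x q)" for s
    unfolding first_preact_loss_def
    using sum_fun_upd_mult[of "{..<k 0}" q "W 1 l" s x] q
    by (intro loss_cong_first_preact \<open>d \<ge> 2\<close>) (auto simp: preact P_def)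
  have "?G differentiable (at P)"
    unfolding first_preact_loss_def[abs_def]
  proof (rule loss_differentiable[OF assms(1)])
    fix i p r
    show "(\<lambda>y. (W(1 := (W 1)(l := (\<lambda>q. y * x q)))) i p r) differentiable (at P)"
      by (cases "i = 1"; cases "p = l") auto
  qed
  then have outer: "(?G has_real_derivative deriv ?G P) (at P)"
    by (simp add: DERIV_deriv_iff_real_differentiable)
  have inner: "((\<lambda>s. P + (s - W 1 l q) * x q) has_real_derivative x q) (at (W 1 l q))"
    by (auto intro!: derivative_eq_intros)
  have "((\<lambda>s. ?G (P + (s - W 1 l q) * x q)) has_real_derivative deriv ?G P * x q) (at (W 1 l q))"
    using DERIV_chain2[OF _ inner] outer by simp
  then show ?thesis
    unfolding grad_def loss_eq P_def by (simp add: DERIV_imp_deriv mult.commute)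
qed

lemma grad_last_layer:
  assumes "d \<ge> 1" and p: "p < k d" and q: "q < k (d-1)"
  shows "grad \<phi> k d x W d p q = - (x p - net \<phi> W k d x p) * act \<phi> W k (d-1) x q"
proof -
  define h where "h = act \<phi> W k (d-1) x q"
  define e where "e = x p - net \<phi> W k d x p"
  have "act \<phi> (weight_upd W d p q s) k (d-1) x = act \<phi> W k (d-1) x" for s
    using \<open>d \<ge> 1\<close> by (intro act_cong_layers) auto
  then have net_upd: "net \<phi> (weight_upd W d p q s) k d x =
      (net \<phi> W k d x)(p := net \<phi> W k d x p + (s - W d p q) * h)" for s
    unfolding net_def h_def using sum_fun_upd_mult[of "{..<k (d-1)}" q "W d p" s] q by auto
  have loss_upd: "loss \<phi> (weight_upd W d p q s) k d x
      = loss \<phi> W k d x - e * ((s - W d p q) * h) + 1/2 * ((s - W d p q) * h)^2" for s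
  proof -
    have "loss \<phi> (weight_upd W d p q s) k d x = 1/2 * (\<Sum>p'<k d. (x p' - net \<phi> W k d x p')^2
       + (if p' = p then - 2 * e * ((s - W d p q) * h) + ((s - W d p q) * h)^2 else 0))"
      unfolding loss_def net_upd e_def
      by (intro arg_cong[where f = "\<lambda>t. 1/2 * t"] sum.cong) (auto simp: power2_eq_square algebra_simps)
    also have "\<dots> = loss \<phi> W k d x - e * ((s - W d p q) * h) + 1/2 * ((s - W d p q) * h)^2"
      using p by (simp add: sum.distrib loss_def algebra_simps)
    finally show ?thesis .
  qed
  have "((\<lambda>s. loss \<phi> W k d x - e * ((s - W d p q) * h) + 1/2 * ((s - W d p q) * h)^2)
      has_real_derivative - e * h) (at (W d p q))"
    by (auto intro!: derivative_eq_intros)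
  then show ?thesis
    unfolding grad_def loss_upd e_def h_def by (rule DERIV_imp_deriv)
qed

definition tied_weights :: "(nat \<Rightarrow> nat) \<Rightarrow> nat \<Rightarrow> (nat \<Rightarrow> real) \<Rightarrow> weights \<Rightarrow> bool" where
  "tied_weights k d x W \<longleftrightarrow> (\<exists>\<alpha> \<beta> w.
         (\<forall>p<k d. \<forall>q<k (d-1). W d p q = \<alpha> * x p)
       \<and> (\<forall>l<k 1. \<forall>q<k 0. W 1 l q = \<beta> * x q)
       \<and> (\<forall>i\<in>{2..d-1}. \<forall>p<k i. \<forall>q<k (i-1). W i p q = w i))"

lemma tied_weights_iff:
  "tied_weights k d x W \<longleftrightarrow> (\<exists>a b w.
         (\<forall>p<k d. \<forall>q<k (d-1). W d p q = x p * a q) \<and> (\<forall>j<k (d-1). a j = a 0)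
       \<and> (\<forall>l<k 1. \<forall>q<k 0. W 1 l q = b l * x q) \<and> (\<forall>l<k 1. b l = b 0)
       \<and> (\<forall>i\<in>{2..d-1}. \<forall>p<k i. \<forall>q<k (i-1). W i p q = w i))"
  (is "_ \<longleftrightarrow> (\<exists>a b w. ?vec a b w)")
proof
  assume "tied_weights k d x W"
  then obtain \<alpha> \<beta> w where
    "\<forall>p<k d. \<forall>q<k (d-1). W d p q = \<alpha> * x p" "\<forall>l<k 1. \<forall>q<k 0. W 1 l q = \<beta> * x q"
    "\<forall>i\<in>{2..d-1}. \<forall>p<k i. \<forall>q<k (i-1). W i p q = w i"
    unfolding tied_weights_def by blast
  then have "?vec (\<lambda>_. \<alpha>) (\<lambda>_. \<beta>) w"
    by (simp add: mult.commute)
  then show "\<exists>a b w. ?vec a b w"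
    by (intro exI)
next
  assume "\<exists>a b w. ?vec a b w"
  then obtain a b w where
    Wd: "\<forall>p<k d. \<forall>q<k (d-1). W d p q = x p * a q" and a: "\<forall>j<k (d-1). a j = a 0"
    and W1: "\<forall>l<k 1. \<forall>q<k 0. W 1 l q = b l * x q" and b: "\<forall>l<k 1. b l = b 0"
    and Wi: "\<forall>i\<in>{2..d-1}. \<forall>p<k i. \<forall>q<k (i-1). W i p q = w i"
    by blast
  have "W d p q = a 0 * x p" if "p < k d" "q < k (d-1)" for p q
    using Wd[rule_format, OF that] a[rule_format, OF that(2)] by simp
  moreover have "W 1 l q = b 0 * x q" if "l < k 1" "q < k 0" for l q
    using W1[rule_format, OF that] b[rule_format, OF that(1)] by simp
  ultimately show "tied_weights k d x W"
    unfolding tied_weights_def using Wi by blast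
qed

lemma tied_weights_rows_eq:
  assumes "tied_weights k d x W" "1 \<le> j" "j \<le> d-1" "u < k j" "v < k j" "q < k (j-1)"
  shows "W j u q = W j v q"
  using assms unfolding tied_weights_def by (cases "j = 1") auto

lemma tied_weights_cols_eq:
  assumes "tied_weights k d x W" "2 \<le> j" "j \<le> d" "p < k j" "u < k (j-1)" "v < k (j-1)"
  shows "W j p u = W j p v"
  using assms unfolding tied_weights_def by (cases "j = d") auto

lemma tied_weights_diff_scale:
  assumes "tied_weights k d x W" "tied_weights k d x G"
  shows "tied_weights k d x (\<lambda>i p q. W i p q - c * G i p q)"
proof -
  obtain \<alpha> \<beta> w where
    "\<forall>p<k d. \<forall>q<k (d-1). W d p q = \<alpha> * x p" "\<forall>l<k 1. \<forall>q<k 0. W 1 l q = \<beta> * x q"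
    "\<forall>i\<in>{2..d-1}. \<forall>p<k i. \<forall>q<k (i-1). W i p q = w i"
    using assms(1) unfolding tied_weights_def by blast
  moreover obtain \<alpha>' \<beta>' w' where
    "\<forall>p<k d. \<forall>q<k (d-1). G d p q = \<alpha>' * x p" "\<forall>l<k 1. \<forall>q<k 0. G 1 l q = \<beta>' * x q"
    "\<forall>i\<in>{2..d-1}. \<forall>p<k i. \<forall>q<k (i-1). G i p q = w' i"
    using assms(2) unfolding tied_weights_def by blast
  ultimately show ?thesis
    unfolding tied_weights_def
    by (intro exI[of _ "\<alpha> - c * \<alpha>'"] exI[of _ "\<beta> - c * \<beta>'"] exI[of _ "\<lambda>i. w i - c * w' i"])
      (simp add: algebra_simps)
qed

lemma tied_weights_grad_rows_eq:
  assumes "tied_weights k d x W" "1 \<le> j" "Suc j \<le> d" "u < k j" "v < k j" "q < k (j-1)"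
  shows "grad \<phi> k d x W j u q = grad \<phi> k d x W j v q"
  using assms by (intro grad_eq_swapped_rows tied_weights_rows_eq tied_weights_cols_eq) auto

lemma tied_weights_grad_cols_eq:
  assumes "tied_weights k d x W" "1 \<le> j" "Suc j \<le> d" "u < k j" "v < k j" "p < k (Suc j)"
  shows "grad \<phi> k d x W (Suc j) p u = grad \<phi> k d x W (Suc j) p v"
  using assms by (intro grad_eq_swapped_cols tied_weights_rows_eq tied_weights_cols_eq) auto

lemma tied_weights_grad:
  assumes diff: "\<And>z. \<phi> differentiable (at z)" and d2: "d \<ge> 2" and kpos: "\<forall>i\<le>d. k i > 0"
    and xnorm: "(\<Sum>q<k 0. (x q)^2) = 1" and tied: "tied_weights k d x W"
  shows "tied_weights k d x (grad \<phi> k d x W)"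
proof -
  obtain \<alpha> where Wd: "\<forall>p<k d. \<forall>q<k (d-1). W d p q = \<alpha> * x p"
    using tied unfolding tied_weights_def by blast
  let ?g = "grad \<phi> k d x W"
  define h where "h = act \<phi> W k (d-1) x 0"
  define m where "m = (\<Sum>q<k (d-1). act \<phi> W k (d-1) x q)"
  define D where "D = deriv (first_preact_loss \<phi> k d x W 0) (\<Sum>r<k 0. W 1 0 r * x r)"
  have last: "?g d p q = - (1 - \<alpha> * m) * h * x p" if "p < k d" "q < k (d-1)" for p q
  proof -
    have "Suc (d-2) = d-1" "Suc (d-1) = d" using d2 by auto
    then have "?g d p q = ?g d p 0"
      using tied_weights_grad_cols_eq[OF tied, of "d-1" q 0 p] that kpos d2 by simp
    also have "\<dots> = - (x p - net \<phi> W k d x p) * h"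
      unfolding h_def using grad_last_layer[of d p k 0] that kpos d2 by simp
    also have "net \<phi> W k d x p = \<alpha> * x p * m"
      unfolding net_def m_def sum_distrib_left using that Wd by (intro sum.cong) auto
    finally show ?thesis by (simp add: algebra_simps)
  qed
  have first: "?g 1 l q = D * x q" if "l < k 1" "q < k 0" for l q
    using tied_weights_grad_rows_eq[OF tied, of 1 l 0 q]
      grad_first_layer[where k = k and x = x, OF diff d2 xnorm, of q W 0] that kpos d2
    unfolding D_def by simp
  have middle: "?g i p q = ?g i 0 0" if "i \<in> {2..d-1}" "p < k i" "q < k (i-1)" for i p q
  proof -
    have i: "Suc (i-1) = i" "i-1 \<ge> 1" "Suc i \<le> d" and k: "k i > 0" "k (i-1) > 0"
      using that kpos by auto
    have "?g i p q = ?g i 0 q"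
      using tied_weights_grad_rows_eq[OF tied, of i p 0 q] that i k by simp
    also have "\<dots> = ?g i 0 0"
      using tied_weights_grad_cols_eq[OF tied, of "i-1" q 0 0] that i k by simp
    finally show ?thesis .
  qed
  show ?thesis
    unfolding tied_weights_def
    using last first middle
    by (intro exI[of _ "- (1 - \<alpha> * m) * h"] exI[of _ D] exI[of _ "\<lambda>i. ?g i 0 0"]) blast
qed

theorem mainTheorem10:
  fixes \<phi> :: "real \<Rightarrow> real" and k :: "nat \<Rightarrow> nat" and d :: nat
    and x :: "nat \<Rightarrow> real" and \<gamma> :: real and W0 :: weights
  assumes diff: "\<forall>z. \<phi> differentiable (at z)"
    and d2: "d \<ge> 2"
    and kpos: "\<forall>i\<le>d. k i > 0"
    and kd: "k d = k 0"
    and xnorm: "sqrt (\<Sum>p<k 0. (x p)^2) = 1"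
    and gam: "\<gamma> > 0"
    and init: "\<exists>a b w.
         (\<forall>p<k d. \<forall>q<k (d-1). W0 d p q = x p * a q) \<and> (\<forall>j<k (d-1). a j = a 0)
       \<and> (\<forall>l<k 1. \<forall>q<k 0. W0 1 l q = b l * x q) \<and> (\<forall>l<k 1. b l = b 0)
       \<and> (\<forall>i\<in>{2..d-1}. \<forall>p<k i. \<forall>q<k (i-1). W0 i p q = w i)"
  shows "\<forall>t. \<exists>a b w.
         (\<forall>p<k d. \<forall>q<k (d-1). gd_iter \<phi> k d x \<gamma> W0 t d p q = x p * a q) \<and> (\<forall>j<k (d-1). a j = a 0)
       \<and> (\<forall>l<k 1. \<forall>q<k 0. gd_iter \<phi> k d x \<gamma> W0 t 1 l q = b l * x q) \<and> (\<forall>l<k 1. b l = b 0)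
       \<and> (\<forall>i\<in>{2..d-1}. \<forall>p<k i. \<forall>q<k (i-1). gd_iter \<phi> k d x \<gamma> W0 t i p q = w i)"
proof -
  have xnorm': "(\<Sum>p<k 0. (x p)^2) = 1"
    using xnorm by simp
  have "tied_weights k d x (gd_iter \<phi> k d x \<gamma> W0 t)" for t
  proof (induction t)
    case 0
    show ?case
      unfolding gd_iter_def funpow_0 tied_weights_iff by (rule init)
  next
    case (Suc t)
    then show ?case
      using tied_weights_diff_scale[OF Suc tied_weights_grad[OF _ d2 kpos xnorm' Suc]] diff
      by (simp add: gd_iter_def gd_step_def)
  qed
  then show ?thesis
    by (simp only: tied_weights_iff simp_thms)
qed

end
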